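(* Let $F$ be a non-degenerate distribution function with finite second moment belonging to the class NCP. If there exist a finite constant $C$ and a positive integer $k_0$ such that \[ \frac{\mathbb{E}[Z_k^2]}{k\,(\mathbb{E}[Z_k])^2}\le C\quad\text{for all }k\ge k_0, \] then the partial maxima BLUE $L_2^{(n)}$ of $\theta_2$ satisfies $\operatorname{Var}[L_2^{(n)}]=O(1/\log n)$ as $n\to\infty$.
   Context: For unknown $\theta_1\in\mathbb{R}$, $\theta_2>0$, $X_1^*,\dots,X_n^*$ are i.i.d. with distribution function $F((x-\theta_1)/\theta_2)$, $X^*_{j:j}=\max\{X_1^*,\dots,X_j^*\}$. Linear estimators are $\sum_i c_iX^*_{i:i}$ with constant $c_i$; $L_2^{(n)}$ is the linear estimator unbiased for $\theta_2$ for all $(\theta_1,\theta_2)$ with minimum variance. Let $X_1,X_2,\dots$ be i.i.d. from $F$, $X_{k:k}=\max\{X_1,\dots,X_k\}$, and $Z_k=X_{k+1:k+1}-X_{k:k}$, $k\ge1$. $F$ belongs to NCP if $\operatorname{Cov}[Z_i,Z_j]\le0$ for all positive integers $i\ne j$. *)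

theory Defs
  imports "HOL-Probability.Probability" "HOL-Library.Landau_Symbols"
begin

text \<open>Partial maximum X_{k:k} = max of X_1..X_k; the sample is indexed X 0, ..., X (k-1).\<close>
definition pmax :: "(nat \<Rightarrow> 'a \<Rightarrow> real) \<Rightarrow> nat \<Rightarrow> 'a \<Rightarrow> real" where
  "pmax X k \<omega> = Max ((\<lambda>i. X i \<omega>) ` {..<k})"

definition Zinc :: "(nat \<Rightarrow> 'a \<Rightarrow> real) \<Rightarrow> nat \<Rightarrow> 'a \<Rightarrow> real" where
  "Zinc X k \<omega> = pmax X (Suc k) \<omega> - pmax X k \<omega>"

definition covar :: "'a measure \<Rightarrow> ('a \<Rightarrow> real) \<Rightarrow> ('a \<Rightarrow> real) \<Rightarrow> real" where
  "covar M U V = (\<integral>\<omega>. (U \<omega> - (\<integral>x. U x \<partial>M)) * (V \<omega> - (\<integral>x. V x \<partial>M)) \<partial>M)"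

definition NCP :: "'a measure \<Rightarrow> (nat \<Rightarrow> 'a \<Rightarrow> real) \<Rightarrow> bool" where
  "NCP M X \<longleftrightarrow> (\<forall>i j. 1 \<le> i \<longrightarrow> 1 \<le> j \<longrightarrow> i \<noteq> j \<longrightarrow> covar M (Zinc X i) (Zinc X j) \<le> 0)"

text \<open>Linear estimator sum_{i=1}^n c_i X*_{i:i}, where X*_j = t1 + t2 X_j.\<close>
definition lin_est :: "(nat \<Rightarrow> 'a \<Rightarrow> real) \<Rightarrow> real \<Rightarrow> real \<Rightarrow> (nat \<Rightarrow> real) \<Rightarrow> nat \<Rightarrow> 'a \<Rightarrow> real" where
  "lin_est X t1 t2 c n \<omega> = (\<Sum>i=1..n. c i * (t1 + t2 * pmax X i \<omega>))"

definition unbiased_theta2 :: "'a measure \<Rightarrow> (nat \<Rightarrow> 'a \<Rightarrow> real) \<Rightarrow> nat \<Rightarrow> (nat \<Rightarrow> real) \<Rightarrow> bool" where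
  "unbiased_theta2 M X n c \<longleftrightarrow>
     (\<forall>t1 t2. t2 > 0 \<longrightarrow> (\<integral>\<omega>. lin_est X t1 t2 c n \<omega> \<partial>M) = t2)"

text \<open>Variance of the BLUE L_2^{(n)} under the parameter (t1, t2): the minimal variance
  among unbiased linear estimators.\<close>
definition blue_var :: "'a measure \<Rightarrow> (nat \<Rightarrow> 'a \<Rightarrow> real) \<Rightarrow> real \<Rightarrow> real \<Rightarrow> nat \<Rightarrow> real" where
  "blue_var M X t1 t2 n =
     Inf {prob_space.variance M (lin_est X t1 t2 c n) | c. unbiased_theta2 M X n c}"

end

theory Submission
  imports Defs
begin

text \<open>If \<open>\<Sum>\<^sub>i c\<^sub>i = 0\<close>, summation by parts turns the estimator into
  \<open>\<theta>\<^sub>2 \<Sum>\<^sub>k d\<^sub>k Z\<^sub>k\<close> with \<open>d\<^sub>k = c\<^sub>k\<^sub>+\<^sub>1 + \<dots> + c\<^sub>n\<close>. Take \<open>d\<^sub>k = 1 / (k E[Z\<^sub>k] H)\<close> for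
  \<open>k\<^sub>0 \<le> k < n\<close> and \<open>d\<^sub>k = 0\<close> otherwise, where \<open>H = \<Sum> 1/k\<close> over \<open>k\<^sub>0 \<le> k < n\<close>; then
  \<open>\<Sum>\<^sub>k d\<^sub>k E[Z\<^sub>k] = 1\<close>, so the estimator is unbiased. The weights are nonnegative and NCP makes
  every off-diagonal covariance nonpositive, so the variance is at most
  \<open>\<theta>\<^sub>2\<^sup>2 \<Sum> d\<^sub>k\<^sup>2 E[Z\<^sub>k\<^sup>2] \<le> \<theta>\<^sub>2\<^sup>2 C \<Sum> 1/(k H\<^sup>2) = \<theta>\<^sub>2\<^sup>2 C / H\<close>, while \<open>H \<ge> ln n - ln k\<^sub>0\<close>.
  The weights exist because \<open>E[Z\<^sub>k] > 0\<close>: with positive probability the first \<open>k\<close>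
  observations lie below the mean and the next one above it.\<close>

lemma integrable_mult_of_square_integrable:
  fixes f g :: "'a \<Rightarrow> real"
  assumes [measurable]: "f \<in> borel_measurable M" "g \<in> borel_measurable M"
    and "integrable M (\<lambda>x. (f x)\<^sup>2)" "integrable M (\<lambda>x. (g x)\<^sup>2)"
  shows "integrable M (\<lambda>x. f x * g x)"
proof (rule Bochner_Integration.integrable_bound)
  show "integrable M (\<lambda>x. (f x)\<^sup>2 + (g x)\<^sup>2)"
    using assms by auto
  have "\<bar>a * b\<bar> \<le> a\<^sup>2 + b\<^sup>2" for a b :: real
    using sum_squares_bound[of "\<bar>a\<bar>" "\<bar>b\<bar>"] abs_ge_zero[of "a * b"]
    unfolding abs_mult power2_abs by linarith
  then show "AE x in M. norm (f x * g x) \<le> norm ((f x)\<^sup>2 + (g x)\<^sup>2)"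
    by simp
qed auto

lemma integrable_square_diff:
  fixes f g :: "'a \<Rightarrow> real"
  assumes [measurable]: "f \<in> borel_measurable M" "g \<in> borel_measurable M"
    and "integrable M (\<lambda>x. (f x)\<^sup>2)" "integrable M (\<lambda>x. (g x)\<^sup>2)"
  shows "integrable M (\<lambda>x. (f x - g x)\<^sup>2)"
proof -
  have "(\<lambda>x. (f x - g x)\<^sup>2) = (\<lambda>x. (f x)\<^sup>2 + (g x)\<^sup>2 - 2 * (f x * g x))"
    by (auto simp: power2_eq_square algebra_simps)
  then show ?thesis
    using integrable_mult_of_square_integrable[OF assms] assms by simp
qed

lemma summation_by_parts:
  fixes d P :: "nat \<Rightarrow> 'a::comm_ring"
  assumes "d 0 = 0"
  shows "(\<Sum>i=1..n. (d (i - 1) - d i) * P i) = (\<Sum>k<n. d k * (P (Suc k) - P k)) - d n * P n"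
proof (induction n)
  case (Suc n)
  then show ?case
    by (simp add: sum.cl_ivl_Suc algebra_simps)
qed (simp add: assms)

lemma sum_inverse_ge_ln_diff:
  assumes "1 \<le> m" "m \<le> n"
  shows "ln (real n) - ln (real m) \<le> (\<Sum>k=m..<n. 1 / real k)"
proof -
  have "ln (real (Suc k)) - ln (real k) \<le> 1 / real k" if "m \<le> k" for k
  proof -
    have k: "1 \<le> real k"
      using that assms by simp
    have "1 + 1 / real k = real (Suc k) / real k"
      using k by (simp add: field_simps)
    then have "ln (real (Suc k)) - ln (real k) = ln (1 + 1 / real k)"
      using k by (simp add: ln_div)
    also have "\<dots> \<le> 1 / real k"
      using k by (intro ln_add_one_self_le_self) auto
    finally show ?thesis .
  qed
  then have "(\<Sum>k=m..<n. ln (real (Suc k)) - ln (real k)) \<le> (\<Sum>k=m..<n. 1 / real k)"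
    by (intro sum_mono) auto
  then show ?thesis
    using sum_Suc_diff'[OF assms(2), of "\<lambda>k. ln (real k)"] by simp
qed

lemma inverse_sum_inverse_bigo_inverse_ln:
  assumes "1 \<le> m"
  shows "(\<lambda>n. 1 / (\<Sum>k=m..<n. 1 / real k)) \<in> O(\<lambda>n. 1 / ln (real n))"
proof (rule bigoI[where c = 2])
  show "eventually (\<lambda>n. norm (1 / (\<Sum>k=m..<n. 1 / real k)) \<le> 2 * norm (1 / ln (real n))) at_top"
    using eventually_ge_at_top[of "m\<^sup>2 + 2"]
  proof eventually_elim
    case (elim n)
    have "2 * ln (real m) = ln (real (m\<^sup>2))"
      using assms by (simp add: ln_realpow)
    also have "\<dots> \<le> ln (real n)"
      using elim assms by (subst ln_le_cancel_iff) auto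
    finally have "ln (real n) / 2 \<le> (\<Sum>k=m..<n. 1 / real k)"
      using sum_inverse_ge_ln_diff[OF assms, of n] elim power2_nat_le_imp_le[of m n] by linarith
    moreover have "0 < ln (real n)"
      using elim by simp
    ultimately show ?case
      by (simp add: field_simps)
  qed
qed

lemma pmax_measurable [measurable]:
  assumes "\<And>i. X i \<in> borel_measurable M"
  shows "pmax X k \<in> borel_measurable M"
  unfolding pmax_def[abs_def] using assms by measurable

lemma Zinc_measurable [measurable]:
  assumes "\<And>i. X i \<in> borel_measurable M"
  shows "Zinc X k \<in> borel_measurable M"
  unfolding Zinc_def[abs_def] using pmax_measurable[OF assms] by measurable

lemma pmax_attained:
  assumes "0 < k"
  obtains j where "j < k" and "pmax X k \<omega> = X j \<omega>"
proof -
  have "pmax X k \<omega> \<in> (\<lambda>i. X i \<omega>) ` {..<k}"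
    unfolding pmax_def using assms by (intro Max_in) auto
  then show ?thesis
    using that by blast
qed

lemma Zinc_nonneg: "0 < k \<Longrightarrow> 0 \<le> Zinc X k \<omega>"
  unfolding Zinc_def pmax_def by (auto intro!: Max_mono)

lemma lin_est_increment_weights:
  assumes "d 0 = 0" "d n = 0"
  shows "lin_est X t1 t2 (\<lambda>i. d (i - 1) - d i) n \<omega> = t2 * (\<Sum>k<n. d k * Zinc X k \<omega>)"
proof -
  have "lin_est X t1 t2 (\<lambda>i. d (i - 1) - d i) n \<omega>
      = t1 * (\<Sum>i=1..n. (d (i - 1) - d i) * 1) + t2 * (\<Sum>i=1..n. (d (i - 1) - d i) * pmax X i \<omega>)"
    unfolding lin_est_def sum_distrib_left sum.distrib[symmetric]
    by (intro sum.cong) (simp_all add: algebra_simps)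
  also have "\<dots> = t2 * (\<Sum>k<n. d k * Zinc X k \<omega>)"
    unfolding summation_by_parts[of d, OF assms(1)] by (simp add: assms(2) Zinc_def)
  finally show ?thesis .
qed

lemma (in prob_space) prob_gt_expectation_pos:
  fixes Y :: "'a \<Rightarrow> real"
  assumes Y: "integrable M Y" and nondeg: "\<And>c. prob {\<omega> \<in> space M. Y \<omega> = c} < 1"
  shows "0 < prob {\<omega> \<in> space M. expectation Y < Y \<omega>}"
proof (rule ccontr)
  have [measurable]: "Y \<in> borel_measurable M"
    using Y by (rule borel_measurable_integrable)
  assume "\<not> ?thesis"
  then have "prob {\<omega> \<in> space M. expectation Y < Y \<omega>} = 0"
    using measure_nonneg[of M "{\<omega> \<in> space M. expectation Y < Y \<omega>}"] by linarith
  then have "AE \<omega> in M. Y \<omega> \<le> expectation Y"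
    by (subst (asm) prob_Collect_eq_0) (auto simp: not_less)
  then have nonneg: "AE \<omega> in M. 0 \<le> expectation Y - Y \<omega>"
    by eventually_elim simp
  have "(\<integral>\<omega>. expectation Y - Y \<omega> \<partial>M) = 0"
    using Y by (simp add: prob_space)
  moreover have "integrable M (\<lambda>\<omega>. expectation Y - Y \<omega>)"
    using Y by simp
  ultimately have "AE \<omega> in M. expectation Y - Y \<omega> = 0"
    using integral_nonneg_eq_0_iff_AE nonneg by blast
  then have "prob {\<omega> \<in> space M. Y \<omega> = expectation Y} = 1"
    by (subst prob_Collect_eq_1) auto
  with nondeg[of "expectation Y"] show False
    by simp
qed

lemma (in prob_space) prob_lt_expectation_pos:
  fixes Y :: "'a \<Rightarrow> real"
  assumes "integrable M Y" and "\<And>c. prob {\<omega> \<in> space M. Y \<omega> = c} < 1"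
  shows "0 < prob {\<omega> \<in> space M. Y \<omega> < expectation Y}"
proof -
  have "{\<omega> \<in> space M. - Y \<omega> = c} = {\<omega> \<in> space M. Y \<omega> = - c}" for c
    by auto
  then have "\<And>c. prob {\<omega> \<in> space M. - Y \<omega> = c} < 1"
    using assms(2) by simp
  then show ?thesis
    using prob_gt_expectation_pos[of "\<lambda>\<omega>. - Y \<omega>"] assms(1) by simp
qed

lemma (in prob_space) variance_weighted_sum:
  fixes Y :: "'i \<Rightarrow> 'a \<Rightarrow> real"
  assumes "finite S"
    and [measurable]: "\<And>k. k \<in> S \<Longrightarrow> Y k \<in> borel_measurable M"
    and "\<And>k. k \<in> S \<Longrightarrow> integrable M (\<lambda>\<omega>. (Y k \<omega>)\<^sup>2)"
  shows "variance (\<lambda>\<omega>. \<Sum>k\<in>S. d k * Y k \<omega>) = (\<Sum>k\<in>S. \<Sum>l\<in>S. d k * d l * covar M (Y k) (Y l))"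
proof -
  have integrable_Y: "integrable M (Y k)" if "k \<in> S" for k
    using square_integrable_imp_integrable[OF assms(2,3)[OF that]] .
  define Y' where "Y' k \<omega> = Y k \<omega> - expectation (Y k)" for k \<omega>
  have Y'_product: "integrable M (\<lambda>\<omega>. Y' k \<omega> * Y' l \<omega>)" if "k \<in> S" "l \<in> S" for k l
    unfolding Y'_def using assms that
    by (intro integrable_mult_of_square_integrable integrable_square_diff) auto
  have mean: "expectation (\<lambda>\<omega>. \<Sum>k\<in>S. d k * Y k \<omega>) = (\<Sum>k\<in>S. d k * expectation (Y k))"
    using integrable_Y by (subst Bochner_Integration.integral_sum) auto
  have "(\<Sum>k\<in>S. d k * Y k \<omega>) - (\<Sum>k\<in>S. d k * expectation (Y k)) = (\<Sum>k\<in>S. d k * Y' k \<omega>)" for \<omega>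
    by (simp add: Y'_def right_diff_distrib sum_subtractf)
  then have "variance (\<lambda>\<omega>. \<Sum>k\<in>S. d k * Y k \<omega>)
      = expectation (\<lambda>\<omega>. \<Sum>k\<in>S. \<Sum>l\<in>S. d k * d l * (Y' k \<omega> * Y' l \<omega>))"
    unfolding mean by (simp add: power2_eq_square sum_product mult_ac)
  also have "\<dots> = (\<Sum>k\<in>S. \<Sum>l\<in>S. d k * d l * expectation (\<lambda>\<omega>. Y' k \<omega> * Y' l \<omega>))"
    using Y'_product by (simp add: Bochner_Integration.integral_sum)
  finally show ?thesis
    by (simp add: covar_def Y'_def)
qed

lemma (in prob_space) variance_weighted_sum_le:
  fixes Y :: "'i \<Rightarrow> 'a \<Rightarrow> real"
  assumes "finite S"
    and [measurable]: "\<And>k. k \<in> S \<Longrightarrow> Y k \<in> borel_measurable M"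
    and square_integrable: "\<And>k. k \<in> S \<Longrightarrow> integrable M (\<lambda>\<omega>. (Y k \<omega>)\<^sup>2)"
    and covar_nonpos: "\<And>k l. k \<in> S \<Longrightarrow> l \<in> S \<Longrightarrow> k \<noteq> l \<Longrightarrow> covar M (Y k) (Y l) \<le> 0"
    and weights_nonneg: "\<And>k. k \<in> S \<Longrightarrow> 0 \<le> d k"
  shows "variance (\<lambda>\<omega>. \<Sum>k\<in>S. d k * Y k \<omega>) \<le> (\<Sum>k\<in>S. (d k)\<^sup>2 * expectation (\<lambda>\<omega>. (Y k \<omega>)\<^sup>2))"
proof -
  have row_le: "(\<Sum>l\<in>S. d k * d l * covar M (Y k) (Y l)) \<le> (d k)\<^sup>2 * expectation (\<lambda>\<omega>. (Y k \<omega>)\<^sup>2)"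
    if k: "k \<in> S" for k
  proof -
    have "(\<Sum>l\<in>S - {k}. d k * d l * covar M (Y k) (Y l)) \<le> 0"
      using covar_nonpos weights_nonneg k
      by (intro sum_nonpos) (auto intro!: mult_nonneg_nonpos)
    moreover have "integrable M (Y k)"
      using square_integrable_imp_integrable[OF assms(2) square_integrable, OF k k] .
    then have "covar M (Y k) (Y k) \<le> expectation (\<lambda>\<omega>. (Y k \<omega>)\<^sup>2)"
      using variance_eq[of "Y k"] square_integrable[OF k] by (simp add: covar_def power2_eq_square)
    then have "d k * d k * covar M (Y k) (Y k) \<le> (d k)\<^sup>2 * expectation (\<lambda>\<omega>. (Y k \<omega>)\<^sup>2)"
      using mult_left_mono[OF _ zero_le_square[of "d k"]] by (simp add: power2_eq_square)
    ultimately show ?thesis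
      using k \<open>finite S\<close> by (simp add: sum.remove)
  qed
  have "variance (\<lambda>\<omega>. \<Sum>k\<in>S. d k * Y k \<omega>) = (\<Sum>k\<in>S. \<Sum>l\<in>S. d k * d l * covar M (Y k) (Y l))"
    by (rule variance_weighted_sum[OF assms(1-3)])
  also have "\<dots> \<le> (\<Sum>k\<in>S. (d k)\<^sup>2 * expectation (\<lambda>\<omega>. (Y k \<omega>)\<^sup>2))"
    using row_le by (rule sum_mono)
  finally show ?thesis .
qed

lemma (in prob_space) variance_mult_left:
  fixes Y :: "'a \<Rightarrow> real"
  shows "variance (\<lambda>\<omega>. c * Y \<omega>) = c\<^sup>2 * variance Y"
proof -
  have "(\<lambda>\<omega>. (c * Y \<omega> - expectation (\<lambda>\<omega>. c * Y \<omega>))\<^sup>2) = (\<lambda>\<omega>. c\<^sup>2 * (Y \<omega> - expectation Y)\<^sup>2)"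
    by (simp add: power2_eq_square algebra_simps)
  then show ?thesis
    by simp
qed

lemma (in prob_space) blue_var_le_variance:
  assumes "unbiased_theta2 M X n c"
  shows "0 \<le> blue_var M X t1 t2 n" and "blue_var M X t1 t2 n \<le> variance (lin_est X t1 t2 c n)"
proof -
  define V where "V = {variance (lin_est X t1 t2 c n) | c. unbiased_theta2 M X n c}"
  have blue_var_eq: "blue_var M X t1 t2 n = Inf V"
    unfolding blue_var_def V_def ..
  have V_nonneg: "\<And>v. v \<in> V \<Longrightarrow> 0 \<le> v"
    unfolding V_def by (auto intro: variance_positive)
  have member: "variance (lin_est X t1 t2 c n) \<in> V"
    unfolding V_def using assms by blast
  then show "0 \<le> blue_var M X t1 t2 n"
    unfolding blue_var_eq using V_nonneg by (intro cInf_greatest) blast+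
  show "blue_var M X t1 t2 n \<le> variance (lin_est X t1 t2 c n)"
    unfolding blue_var_eq using member V_nonneg by (intro cInf_lower bdd_belowI) blast+
qed

locale L2_iid_sample = prob_space +
  fixes X :: "nat \<Rightarrow> 'a \<Rightarrow> real"
  assumes measurable_X [measurable]: "\<And>i. X i \<in> borel_measurable M"
    and indep_X: "indep_vars (\<lambda>_. borel) X UNIV"
    and distr_X: "\<And>i. distr M borel (X i) = distr M borel (X 0)"
    and square_integrable_X0: "integrable M (\<lambda>\<omega>. (X 0 \<omega>)\<^sup>2)"
begin

lemma prob_X_in:
  assumes "A \<in> sets borel"
  shows "prob {\<omega> \<in> space M. X i \<omega> \<in> A} = prob {\<omega> \<in> space M. X 0 \<omega> \<in> A}"
proof -
  have "prob {\<omega> \<in> space M. X j \<omega> \<in> A} = measure (distr M borel (X j)) A" for j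
    using assms by (subst measure_distr) (auto intro!: arg_cong[where f = "measure M"])
  then show ?thesis
    using distr_X[of i] by metis
qed

lemma square_integrable_X: "integrable M (\<lambda>\<omega>. (X i \<omega>)\<^sup>2)"
proof -
  have "integrable (distr M borel (X i)) (\<lambda>x. x\<^sup>2)"
    unfolding distr_X[of i] by (subst integrable_distr_eq) (auto simp: square_integrable_X0)
  then show ?thesis
    by (subst (asm) integrable_distr_eq) auto
qed

lemma square_integrable_pmax:
  assumes "0 < k"
  shows "integrable M (\<lambda>\<omega>. (pmax X k \<omega>)\<^sup>2)"
proof (rule Bochner_Integration.integrable_bound)
  show "integrable M (\<lambda>\<omega>. \<Sum>i<k. (X i \<omega>)\<^sup>2)"
    using square_integrable_X by auto
  show "AE \<omega> in M. norm ((pmax X k \<omega>)\<^sup>2) \<le> norm (\<Sum>i<k. (X i \<omega>)\<^sup>2)"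
  proof (intro AE_I2)
    fix \<omega>
    obtain j where "j < k" and pmax_eq: "pmax X k \<omega> = X j \<omega>"
      using pmax_attained[OF assms] .
    then have "(X j \<omega>)\<^sup>2 \<le> (\<Sum>i<k. (X i \<omega>)\<^sup>2)"
      by (intro member_le_sum) auto
    then show "norm ((pmax X k \<omega>)\<^sup>2) \<le> norm (\<Sum>i<k. (X i \<omega>)\<^sup>2)"
      by (simp add: pmax_eq sum_nonneg)
  qed
qed measurable

lemma square_integrable_Zinc: "0 < k \<Longrightarrow> integrable M (\<lambda>\<omega>. (Zinc X k \<omega>)\<^sup>2)"
  unfolding Zinc_def by (intro integrable_square_diff square_integrable_pmax) auto

lemma integrable_Zinc: "0 < k \<Longrightarrow> integrable M (Zinc X k)"
  by (rule square_integrable_imp_integrable[OF Zinc_measurable[OF measurable_X] square_integrable_Zinc])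

lemma expectation_Zinc_pos:
  assumes nondeg: "\<And>c. prob {\<omega> \<in> space M. X 0 \<omega> = c} < 1" and "0 < k"
  shows "0 < expectation (Zinc X k)"
proof -
  define m where "m = expectation (X 0)"
  have integrable_X0: "integrable M (X 0)"
    by (rule square_integrable_imp_integrable[OF measurable_X square_integrable_X])
  define Q where "Q j x \<longleftrightarrow> (if j = k then m < x else x < m)" for j and x :: real
  define E where "E = (\<Inter>j\<in>{..k}. {\<omega> \<in> space M. Q j (X j \<omega>)})"
  have prob_Q: "prob {\<omega> \<in> space M. Q j (X j \<omega>)} > 0" for j
  proof (cases "j = k")
    case True
    then show ?thesis
      using prob_X_in[of "{m<..}" j] prob_gt_expectation_pos[OF integrable_X0 nondeg]
      by (simp add: Q_def m_def)
  next
    case False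
    then show ?thesis
      using prob_X_in[of "{..<m}" j] prob_lt_expectation_pos[OF integrable_X0 nondeg]
      by (simp add: Q_def m_def)
  qed
  have "indep_events (\<lambda>j. {\<omega> \<in> space M. Q j (X j \<omega>)}) UNIV"
    by (rule indep_eventsI_indep_vars[OF indep_X]) (auto simp: Q_def)
  then have "prob E = (\<Prod>j\<le>k. prob {\<omega> \<in> space M. Q j (X j \<omega>)})"
    unfolding indep_events_def E_def by auto
  then have "0 < prob E"
    using prob_Q by (simp add: prod_pos)
  moreover have "E \<subseteq> {\<omega> \<in> space M. 0 < Zinc X k \<omega>}"
  proof
    fix \<omega> assume \<omega>: "\<omega> \<in> E"
    then have "pmax X k \<omega> < m"
      using \<open>0 < k\<close> unfolding pmax_def by (subst Max_less_iff) (auto simp: E_def Q_def)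
    moreover have "m < X k \<omega>" "X k \<omega> \<le> pmax X (Suc k) \<omega>"
      using \<omega> unfolding pmax_def by (auto simp: E_def Q_def intro!: Max_ge)
    ultimately show "\<omega> \<in> {\<omega> \<in> space M. 0 < Zinc X k \<omega>}"
      using \<omega> by (auto simp: E_def Zinc_def)
  qed
  then have "prob E \<le> prob {\<omega> \<in> space M. 0 < Zinc X k \<omega>}"
    by (rule finite_measure_mono) measurable
  ultimately have Zinc_pos_prob: "0 < prob {\<omega> \<in> space M. 0 < Zinc X k \<omega>}"
    by linarith
  have nonneg: "AE \<omega> in M. 0 \<le> Zinc X k \<omega>"
    by (intro AE_I2 Zinc_nonneg[OF \<open>0 < k\<close>])
  show ?thesis
  proof (rule ccontr)
    assume "\<not> 0 < expectation (Zinc X k)"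
    then have "expectation (Zinc X k) = 0"
      using integral_nonneg_AE[OF nonneg] by linarith
    then have "AE \<omega> in M. Zinc X k \<omega> = 0"
      using integral_nonneg_eq_0_iff_AE[OF integrable_Zinc[OF \<open>0 < k\<close>] nonneg] by simp
    then have "prob {\<omega> \<in> space M. 0 < Zinc X k \<omega>} = 0"
      by (subst prob_Collect_eq_0) auto
    with Zinc_pos_prob show False
      by simp
  qed
qed

lemma exists_unbiased_estimator_variance_le:
  assumes nondeg: "\<And>c. prob {\<omega> \<in> space M. X 0 \<omega> = c} < 1"
    and ncp: "NCP M X"
    and ratio_le: "\<And>k. k0 \<le> k \<Longrightarrow>
      expectation (\<lambda>\<omega>. (Zinc X k \<omega>)\<^sup>2) / (real k * (expectation (Zinc X k))\<^sup>2) \<le> C"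
    and "1 \<le> k0" "k0 < n"
  shows "\<exists>c. unbiased_theta2 M X n c \<and>
    variance (lin_est X t1 t2 c n) \<le> t2\<^sup>2 * C / (\<Sum>k=k0..<n. 1 / real k)"
proof -
  define S where "S = {k0..<n}"
  define H where "H = (\<Sum>k\<in>S. 1 / real k)"
  define e where "e k = expectation (Zinc X k)" for k
  define d where "d k = (if k \<in> S then 1 / (real k * e k * H) else 0)" for k
  define W where "W \<omega> = (\<Sum>k\<in>S. d k * Zinc X k \<omega>)" for \<omega>
  have S_pos: "0 < k" if "k \<in> S" for k
    using that \<open>1 \<le> k0\<close> by (simp add: S_def)
  have e_pos: "0 < e k" if "k \<in> S" for k
    using expectation_Zinc_pos[OF nondeg S_pos[OF that]] by (simp add: e_def)
  have H_pos: "0 < H"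
    unfolding H_def using S_pos \<open>k0 < n\<close> by (intro sum_pos) (auto simp: S_def)
  have d_nonneg: "0 \<le> d k" for k
  proof (cases "k \<in> S")
    case True
    then have "0 < real k * e k * H"
      using e_pos S_pos H_pos by (intro mult_pos_pos) simp_all
    then show ?thesis
      using True by (simp add: d_def)
  qed (simp add: d_def)
  have covar_nonpos: "covar M (Zinc X k) (Zinc X l) \<le> 0" if "k \<in> S" "l \<in> S" "k \<noteq> l" for k l
    using ncp S_pos[OF that(1)] S_pos[OF that(2)] that(3) unfolding NCP_def by simp
  have lin_est_W: "lin_est X t1' t (\<lambda>i. d (i - 1) - d i) n = (\<lambda>\<omega>. t * W \<omega>)" for t1' t
  proof
    fix \<omega>
    have "(\<Sum>k<n. d k * Zinc X k \<omega>) = W \<omega>"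
      unfolding W_def by (rule sum.mono_neutral_right) (auto simp: S_def d_def)
    moreover have "d 0 = 0" "d n = 0"
      using S_pos by (auto simp: d_def S_def)
    ultimately show "lin_est X t1' t (\<lambda>i. d (i - 1) - d i) n \<omega> = t * W \<omega>"
      using lin_est_increment_weights[of d n X t1' t \<omega>] by simp
  qed
  have "expectation W = (\<Sum>k\<in>S. d k * e k)"
    unfolding W_def e_def using integrable_Zinc S_pos by simp
  also have "\<dots> = (\<Sum>k\<in>S. (1 / real k) / H)"
  proof (rule sum.cong)
    fix k assume "k \<in> S"
    then show "d k * e k = 1 / real k / H"
      using e_pos[OF \<open>k \<in> S\<close>] by (simp add: d_def)
  qed simp
  also have "\<dots> = H / H"
    unfolding H_def by (rule sum_divide_distrib[symmetric])
  also have "\<dots> = 1"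
    using H_pos by simp
  finally have expectation_W: "expectation W = 1" .
  then have unbiased: "unbiased_theta2 M X n (\<lambda>i. d (i - 1) - d i)"
    unfolding unbiased_theta2_def lin_est_W by simp
  have "variance W \<le> (\<Sum>k\<in>S. (d k)\<^sup>2 * expectation (\<lambda>\<omega>. (Zinc X k \<omega>)\<^sup>2))"
    unfolding W_def using S_pos square_integrable_Zinc covar_nonpos d_nonneg
    by (intro variance_weighted_sum_le) (auto simp: S_def)
  also have "\<dots> \<le> (\<Sum>k\<in>S. C * (1 / real k) / H\<^sup>2)"
  proof (intro sum_mono)
    fix k assume "k \<in> S"
    then have "(d k)\<^sup>2 * expectation (\<lambda>\<omega>. (Zinc X k \<omega>)\<^sup>2)
        = expectation (\<lambda>\<omega>. (Zinc X k \<omega>)\<^sup>2) / (real k * (e k)\<^sup>2) * (1 / real k) / H\<^sup>2"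
      using e_pos S_pos by (simp add: d_def power2_eq_square)
    also have "\<dots> \<le> C * (1 / real k) / H\<^sup>2"
      using ratio_le[of k] \<open>k \<in> S\<close> by (intro divide_right_mono mult_right_mono) (auto simp: S_def e_def)
    finally show "(d k)\<^sup>2 * expectation (\<lambda>\<omega>. (Zinc X k \<omega>)\<^sup>2) \<le> C * (1 / real k) / H\<^sup>2" .
  qed
  also have "\<dots> = C * H / H\<^sup>2"
    by (simp only: H_def sum_divide_distrib[symmetric] sum_distrib_left[symmetric])
  also have "\<dots> = C / H"
    using H_pos by (simp add: power2_eq_square)
  finally have "variance (lin_est X t1 t2 (\<lambda>i. d (i - 1) - d i) n) \<le> t2\<^sup>2 * (C / H)"
    unfolding lin_est_W variance_mult_left by (rule mult_left_mono) simp
  with unbiased show ?thesis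
    unfolding H_def S_def by auto
qed

lemma blue_var_bigo_inverse_harmonic_tail:
  assumes nondeg: "\<And>c. prob {\<omega> \<in> space M. X 0 \<omega> = c} < 1"
    and ncp: "NCP M X"
    and ratio_le: "\<And>k. k0 \<le> k \<Longrightarrow>
      expectation (\<lambda>\<omega>. (Zinc X k \<omega>)\<^sup>2) / (real k * (expectation (Zinc X k))\<^sup>2) \<le> C"
    and "1 \<le> k0"
  shows "(\<lambda>n. blue_var M X t1 t2 n) \<in> O(\<lambda>n. 1 / (\<Sum>k=k0..<n. 1 / real k))"
proof (rule bigoI[where c = "t2\<^sup>2 * \<bar>C\<bar>"])
  show "eventually (\<lambda>n. norm (blue_var M X t1 t2 n) \<le> t2\<^sup>2 * \<bar>C\<bar> * norm (1 / (\<Sum>k=k0..<n. 1 / real k)))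
    at_top"
    using eventually_gt_at_top[of k0]
  proof eventually_elim
    case (elim n)
    define H where "H = (\<Sum>k=k0..<n. 1 / real k)"
    obtain c where unbiased: "unbiased_theta2 M X n c"
      and variance_le: "variance (lin_est X t1 t2 c n) \<le> t2\<^sup>2 * C / H"
      using exists_unbiased_estimator_variance_le[OF nondeg ncp ratio_le \<open>1 \<le> k0\<close> elim]
      unfolding H_def by blast
    have "0 < H"
      unfolding H_def using \<open>1 \<le> k0\<close> elim by (intro sum_pos) auto
    have "blue_var M X t1 t2 n \<le> t2\<^sup>2 * C / H"
      using blue_var_le_variance(2)[OF unbiased, of t1 t2] variance_le by linarith
    also have "\<dots> \<le> t2\<^sup>2 * \<bar>C\<bar> / H"
      using \<open>0 < H\<close> by (intro divide_right_mono mult_left_mono) auto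
    finally show ?case
      unfolding H_def[symmetric] using blue_var_le_variance(1)[OF unbiased, of t1 t2] \<open>0 < H\<close> by simp
  qed
qed

end

theorem theorem5p1:
  fixes M :: "'a measure" and X :: "nat \<Rightarrow> 'a \<Rightarrow> real"
  assumes "prob_space M"
    and "\<And>i. X i \<in> borel_measurable M"
    and "prob_space.indep_vars M (\<lambda>_. borel) X UNIV"
    and "\<And>i. distr M borel (X i) = distr M borel (X 0)"
    and nondeg: "\<And>c. measure M {\<omega> \<in> space M. X 0 \<omega> = c} < 1"
    and second_moment: "integrable M (\<lambda>\<omega>. (X 0 \<omega>)\<^sup>2)"
    and "NCP M X"
    and "\<exists>C. \<exists>k0::nat. k0 \<ge> 1 \<and> (\<forall>k\<ge>k0.
           (\<integral>\<omega>. (Zinc X k \<omega>)\<^sup>2 \<partial>M) / (real k * (\<integral>\<omega>. Zinc X k \<omega> \<partial>M)\<^sup>2) \<le> C)"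
    and "t2 > 0"
  shows "(\<lambda>n. blue_var M X t1 t2 n) \<in> O(\<lambda>n. 1 / ln (real n))"
proof -
  interpret L2_iid_sample M X
    using assms by (simp add: L2_iid_sample_def L2_iid_sample_axioms_def)
  obtain C k0 where "1 \<le> k0" and ratio_le: "\<And>k. k0 \<le> k \<Longrightarrow>
      expectation (\<lambda>\<omega>. (Zinc X k \<omega>)\<^sup>2) / (real k * (expectation (Zinc X k))\<^sup>2) \<le> C"
    using assms(8) by blast
  \<comment> \<open>The bound holds for every \<open>t2\<close>.\<close>
  have "(\<lambda>n. blue_var M X t1 t2 n) \<in> O(\<lambda>n. 1 / (\<Sum>k=k0..<n. 1 / real k))"
    by (rule blue_var_bigo_inverse_harmonic_tail[OF nondeg assms(7) ratio_le \<open>1 \<le> k0\<close>])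
  also have "(\<lambda>n. 1 / (\<Sum>k=k0..<n. 1 / real k)) \<in> O(\<lambda>n. 1 / ln (real n))"
    by (rule inverse_sum_inverse_bigo_inverse_ln[OF \<open>1 \<le> k0\<close>])
  finally show ?thesis .
qed

end
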